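(* Consider an execution of the convergence algorithm described in the context, with $n>5f$ robots of which at most $f$ are Byzantine and $m$ are correct. Let $U_{(1)}(t)\le\dots\le U_{(m)}(t)$ be the sorted positions of the correct robots at time $t$. If a correct robot $i$ with position $x_i$ is elected at time $t$ (i.e., its observation at time $t$ makes it elected), then $x_i\le U_{(f+1)}(t)$ or $x_i\ge U_{(m-f)}(t)$.
   Context: Setting: $n$ robots on the real line, of which at most $f$ are Byzantine (arbitrary positions). Robots observe the multiset $P(t)$ of all $n$ positions, sorted $P_1(t)\le\dots\le P_n(t)$. Algorithm: robot $i$ with position $x_i$ is elected iff $x_i\le P_{f+1}(t)$ or $x_i\ge P_{n-f}(t)$. Only elected robots move, toward the midpoint of $\min(x_i,P_{2f+1}(t))$ and $\max(x_i,P_{n-2f}(t))$. *)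

theory Defs
  imports Complex_Main "HOL-Library.Multiset"
begin

definition kth :: "real multiset \<Rightarrow> nat \<Rightarrow> real" where
  "kth X k = sorted_list_of_multiset X ! (k - 1)"

definition elected :: "nat \<Rightarrow> nat \<Rightarrow> real multiset \<Rightarrow> real \<Rightarrow> bool" where
  "elected n f P x \<longleftrightarrow> x \<le> kth P (f + 1) \<or> kth P (n - f) \<le> x"

end

theory Submission
  imports Defs
begin

text \<open>The k-th order statistic is at most y exactly when at least k elements are at most y.
  Adding the at most f Byzantine positions B can therefore lower the (f+1)-st order statistic
  and raise the (n-f)-th one by at most |B| ranks; since n = m + |B| the latter lands on the
  (m-f)-th order statistic of the correct positions, so any robot elected in U + B is elected
  in U alone.\<close>

lemma sorted_nth_le_iff_length_filter:
  fixes xs :: "'a::linorder list"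
  assumes "sorted xs" "k < length xs"
  shows "xs ! k \<le> y \<longleftrightarrow> k < length (filter (\<lambda>z. z \<le> y) xs)"
proof
  assume "xs ! k \<le> y"
  then have "\<forall>z \<in> set (take (Suc k) xs). z \<le> y"
    using assms by (auto simp: in_set_conv_nth less_Suc_eq_le) (meson order_trans sorted_nth_mono)
  then have "Suc k = length (filter (\<lambda>z. z \<le> y) (take (Suc k) xs))"
    using assms(2) by simp
  also have "\<dots> \<le> length (filter (\<lambda>z. z \<le> y) xs)"
    by (metis append_take_drop_id filter_append length_append le_add1)
  finally show "k < length (filter (\<lambda>z. z \<le> y) xs)" by simp
next
  assume "k < length (filter (\<lambda>z. z \<le> y) xs)"
  show "xs ! k \<le> y"
  proof (rule ccontr)
    assume "\<not> xs ! k \<le> y"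
    then have "\<forall>z \<in> set (drop k xs). \<not> z \<le> y"
      using assms by (auto simp: in_set_conv_nth) (metis order_trans le_add1 less_diff_conv add.commute sorted_nth_mono)
    then have "length (filter (\<lambda>z. z \<le> y) xs) = length (filter (\<lambda>z. z \<le> y) (take k xs))"
      by (metis append_take_drop_id filter_append filter_False append_Nil2)
    also have "\<dots> \<le> k"
      by (metis length_filter_le length_take min.bounded_iff nle_le)
    finally show False using \<open>k < length (filter (\<lambda>z. z \<le> y) xs)\<close> by simp
  qed
qed

lemma kth_le_iff_size_filter:
  assumes "1 \<le> k" "k \<le> size X"
  shows "kth X k \<le> y \<longleftrightarrow> k \<le> size {#z \<in># X. z \<le> y#}"
proof -
  define xs where "xs = sorted_list_of_multiset X"
  have "mset xs = X" unfolding xs_def by simp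
  then have "length xs = size X" "size {#z \<in># X. z \<le> y#} = length (filter (\<lambda>z. z \<le> y) xs)"
    by (metis size_mset, metis mset_filter size_mset)
  moreover have "sorted xs" unfolding xs_def by simp
  ultimately show ?thesis
    using assms sorted_nth_le_iff_length_filter[of xs "k - 1" y]
    unfolding kth_def xs_def[symmetric] by auto
qed

lemma kth_union_le:
  assumes "1 \<le> k" "k \<le> size X"
  shows "kth (X + Y) k \<le> kth X k"
proof -
  have "k \<le> size {#z \<in># X. z \<le> kth X k#}"
    using kth_le_iff_size_filter[OF assms, of "kth X k"] by simp
  also have "\<dots> \<le> size {#z \<in># X + Y. z \<le> kth X k#}" by simp
  finally show ?thesis
    using kth_le_iff_size_filter[of k "X + Y"] assms by simp
qed

lemma kth_le_kth_union:
  assumes "size Y < k" "k \<le> size X + size Y"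
  shows "kth X (k - size Y) \<le> kth (X + Y) k"
proof -
  define y where "y = kth (X + Y) k"
  have "k \<le> size {#z \<in># X + Y. z \<le> y#}"
    using kth_le_iff_size_filter[of k "X + Y" y] assms unfolding y_def by simp
  also have "\<dots> \<le> size {#z \<in># X. z \<le> y#} + size Y"
    using size_filter_mset_lesseq[of "\<lambda>z. z \<le> y" Y] by simp
  finally show ?thesis
    using kth_le_iff_size_filter[of "k - size Y" X y] assms unfolding y_def by simp
qed

theorem lemma8:
  fixes n f m :: nat
    and U :: "real multiset"  \<comment> \<open>positions of the m correct robots at time t\<close>
    and B :: "real multiset"  \<comment> \<open>positions of the Byzantine robots at time t\<close>
    and x :: real
  assumes "n > 5 * f"
    and "size U = m"
    and "size B \<le> f"
    and "size U + size B = n"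
    and "x \<in># U"
    and "elected n f (U + B) x"
  shows "x \<le> kth U (f + 1) \<or> kth U (m - f) \<le> x"
proof -
  have low: "kth (U + B) (f + 1) \<le> kth U (f + 1)"
    using kth_union_le[of "f + 1" U B] assms by simp
  have "kth U (n - f - size B) \<le> kth (U + B) (n - f)"
    using kth_le_kth_union[of B "n - f" U] assms by simp
  moreover have "n - f - size B = m - f" using assms by simp
  ultimately have high: "kth U (m - f) \<le> kth (U + B) (n - f)" by simp
  show ?thesis using assms(6) low high unfolding elected_def by auto
qed

end
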